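(* Let $V$ and $W$ be subsets of normed spaces over $\mathbb{R}$ or $\mathbb{C}$ and $T:V\to W$. Assume that for every $w\in T(V)$ the set $\arg\min\{\|v\|:v\in V,\ T(v)=w\}$ is a singleton. Let $W'=\{w\in W:\arg\min\{\|w_0-w\|:w_0\in T(V)\}\text{ is a singleton}\}$. Then there exists a pseudo-inverse $S:W'\to V$ of $T$, and it is unique.
   Context: Let $V,W$ be subsets of normed spaces over $\mathbb{R}$ or $\mathbb{C}$ and $T:V\to W$. For a set $E\subseteq W$ with either $E\subseteq T(V)$ or $T(V)\subseteq E$, an operator $S:E\to V$ is a pseudo-inverse of $T$ (on $E$) if: (BAS) for every $w\in E$, the minimum $m_w=\min_{v\in V}\|T(v)-w\|$ is attained, the norm attains its minimum on $\{v\in V:\|T(v)-w\|=m_w\}$, and $S(w)\in\arg\min\{\|v\|:v\in V,\ \|T(v)-w\|=m_w\}$; and (MP2) $S(T(S(w)))=S(w)$ for every $w\in E$. *)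

theory Defs
  imports "HOL-Analysis.Analysis"
begin

definition argmin_on :: "('a \<Rightarrow> real) \<Rightarrow> 'a set \<Rightarrow> 'a set" where
  "argmin_on f A = {x \<in> A. \<forall>y \<in> A. f x \<le> f y}"

text \<open>When the minimum m_w of norm (T v - w) over V is attained, the set
  of v in V with norm (T v - w) = m_w is exactly argmin_on (\<lambda>v. norm (T v - w)) V.\<close>
definition pseudo_inverse ::
  "'a::real_normed_vector set \<Rightarrow> ('a \<Rightarrow> 'b::real_normed_vector) \<Rightarrow> 'b set \<Rightarrow> ('b \<Rightarrow> 'a) \<Rightarrow> bool" where
  "pseudo_inverse V T E S \<longleftrightarrow>
     (E \<subseteq> T ` V \<or> T ` V \<subseteq> E) \<and>
     (\<forall>w \<in> E.
        argmin_on (\<lambda>v. norm (T v - w)) V \<noteq> {} \<and>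
        argmin_on norm (argmin_on (\<lambda>v. norm (T v - w)) V) \<noteq> {} \<and>
        S w \<in> argmin_on norm (argmin_on (\<lambda>v. norm (T v - w)) V)) \<and>
     (\<forall>w \<in> E. S (T (S w)) = S w)"

end

theory Submission
  imports Defs
begin

text \<open>A best approximation of w by T minimises the distance of T v to w, so it is exactly a
  preimage of a nearest point of T(V) to w. When the nearest point p is unique, the minimum-norm
  best approximations are the minimum-norm solutions of T v = p. Hence the pseudo-inverse is
  forced to be the minimum-norm solution for the nearest point, which also gives MP2, since the
  nearest point of T(V) to T(S w) is T(S w) itself.\<close>

lemma argmin_on_comp:
  "argmin_on (\<lambda>x. f (g x)) A = {x \<in> A. g x \<in> argmin_on f (g ` A)}"
  unfolding argmin_on_def by auto

lemma argmin_on_norm_diff_self: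
  assumes "w \<in> A"
  shows "argmin_on (\<lambda>y. norm (y - w)) A = {w}"
  using assms unfolding argmin_on_def by auto

lemma argmin_on_best_approx_eq:
  assumes "argmin_on (\<lambda>y. norm (y - w)) (T ` V) = {p}"
  shows "argmin_on norm (argmin_on (\<lambda>v. norm (T v - w)) V) = argmin_on norm {v \<in> V. T v = p}"
  using argmin_on_comp[of "\<lambda>y. norm (y - w)" T V] assms by simp

lemma argmin_on_best_approx_image:
  assumes "v \<in> V"
  shows "argmin_on norm (argmin_on (\<lambda>x. norm (T x - T v)) V)
           = argmin_on norm {x \<in> V. T x = T v}"
  using argmin_on_best_approx_eq[OF argmin_on_norm_diff_self] assms by blast

theorem mainTheorem6:
  fixes V :: "'a::real_normed_vector set" and W :: "'b::real_normed_vector set"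
    and T :: "'a \<Rightarrow> 'b"
  assumes "T ` V \<subseteq> W"
    and "\<forall>w \<in> T ` V. \<exists>u. argmin_on norm {v \<in> V. T v = w} = {u}"
  shows "let W' = {w \<in> W. \<exists>u. argmin_on (\<lambda>w0. norm (w0 - w)) (T ` V) = {u}} in
           (\<exists>S. pseudo_inverse V T W' S \<and>
                (\<forall>S'. pseudo_inverse V T W' S' \<longrightarrow> (\<forall>w \<in> W'. S' w = S w)))"
proof -
  define W' where "W' = {w \<in> W. \<exists>u. argmin_on (\<lambda>w0. norm (w0 - w)) (T ` V) = {u}}"
  define B where "B w = argmin_on norm (argmin_on (\<lambda>v. norm (T v - w)) V)" for w
  define S where "S w = (THE u. B w = {u})" for w
  have image_sub: "T ` V \<subseteq> W'"
  proof
    fix w assume "w \<in> T ` V"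
    then show "w \<in> W'"
      using assms(1) argmin_on_norm_diff_self[of w "T ` V"] unfolding W'_def by blast
  qed
  have B_singleton: "B w = {S w}" if w: "w \<in> W'" for w
  proof -
    obtain p where p: "argmin_on (\<lambda>y. norm (y - w)) (T ` V) = {p}"
      using w unfolding W'_def by blast
    then have "p \<in> T ` V" unfolding argmin_on_def by blast
    then obtain u where "argmin_on norm {v \<in> V. T v = p} = {u}"
      using assms(2) by blast
    then have "B w = {u}"
      using argmin_on_best_approx_eq[OF p] unfolding B_def by simp
    then show ?thesis unfolding S_def by simp
  qed
  have MP2: "S (T (S w)) = S w" if w: "w \<in> W'" for w
  proof -
    obtain p where p: "argmin_on (\<lambda>y. norm (y - w)) (T ` V) = {p}"
      using w unfolding W'_def by blast
    have "S w \<in> argmin_on norm {v \<in> V. T v = p}"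
      using B_singleton[OF w] argmin_on_best_approx_eq[OF p] unfolding B_def by simp
    then have "S w \<in> V" and "T (S w) = p" unfolding argmin_on_def by auto
    then have "B (T (S w)) = B w"
      using argmin_on_best_approx_image[of "S w" V T] argmin_on_best_approx_eq[OF p]
      unfolding B_def by simp
    then show ?thesis using B_singleton[OF w] unfolding S_def by simp
  qed
  have best_approx_nonempty: "argmin_on (\<lambda>v. norm (T v - w)) V \<noteq> {}" if "w \<in> W'" for w
    using B_singleton[OF that] unfolding B_def argmin_on_def by auto
  have "pseudo_inverse V T W' S"
    using image_sub B_singleton best_approx_nonempty MP2
    unfolding pseudo_inverse_def B_def by simp
  moreover have "\<forall>S'. pseudo_inverse V T W' S' \<longrightarrow> (\<forall>w \<in> W'. S' w = S w)"
    using B_singleton unfolding pseudo_inverse_def B_def by blast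
  ultimately show ?thesis unfolding Let_def W'_def[symmetric] by (intro exI[of _ S] conjI)
qed

end
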